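(* For all $n^+,n^-\ge0$, the operators $W^+|_{\hbar=1}$ and $W^-|_{\hbar=1}$, restricted to the space of polynomials in $p_k^\pm,q_k$ that are bihomogeneous of bidegree $(n^+,n^-)$, are self-adjoint with respect to the scalar product defined on monomials by $(p_\mu,p_\nu)=\delta_{\mu,\nu}\,\zeta(\mu)$, where for $\mu=(\kappa^+,\kappa^-,\lambda)$, $\lambda=(\ell_1,\ell_2,\dots)$, $$\zeta(\mu)=|\mathrm{Aut}(\kappa^+)|\,|\mathrm{Aut}(\kappa^-)|\,|\mathrm{Aut}(\lambda)|\prod_{j=1}^{\ell(\lambda)}\ell_j$$ and $|\mathrm{Aut}(\nu)|$ denotes the product of the factorials of the multiplicities of the parts of a partition $\nu$. (Equivalently, under $p_\mu\leftrightarrow C_\mu/|C_\mu|$, the scalar product $(C_\mu,C_\nu)=\delta_{\mu\nu}n^+!n^-!|C_\mu|$ on $A_{n^+,n^-}$.)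
   Context: $W^+|_{\hbar=1}=\sum_{i,j\ge1}\big(p_i^{\bar i}p_j^{+}\partial/\partial p_{i+j}^{\bar i}+p_{i+j}^{\bar i}\partial^2/\partial p_i^{\bar i}\partial p_j^{+}\big)+\sum_{i\ge1}\big(i\,p_{2i}^+\partial/\partial q_i+q_i\partial/\partial p_{2i}^+\big)$, where $\bar i$ is $+$ for $i$ even and $-$ for $i$ odd; $W^-$ is obtained from $W^+$ by exchanging $p_k^+\leftrightarrow p_k^-$ for all $k$. Bidegrees: $\mathrm{bdeg}\,p_{2k}^\pm=\mathrm{bdeg}\,q_k=(k,k)$, $\mathrm{bdeg}\,p_{2k+1}^+=(k+1,k)$, $\mathrm{bdeg}\,p_{2k+1}^-=(k,k+1)$. For a triple of partitions $\mu=(\kappa^+,\kappa^-,\lambda)$, $p_\mu=\prod p_{k_i^+}^+\prod p_{k_i^-}^-\prod q_{\ell_i}$. (The algebra $A_{n^+,n^-}$, $C_\mu$, $|C_\mu|$ are as follows: states on $N=N^+\sqcup N^-$ are partitions into singletons and $\{+,-\}$ pairs; transitions are ordered pairs of states; $C_\mu$ is the sum of transitions of type $\mu$, i.e. in the $S(N^+)\times S(N^-)$-orbit labelled by $\mu$, and $|C_\mu|=n^+!n^-!/\zeta(\mu)$ is their number.) *)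

theory Defs
  imports Complex_Main "HOL-Library.Poly_Mapping" "HOL-Library.Groups_Big_Fun"
begin

text \<open>Variables: Pp k = p_k^+, Pm k = p_k^-, Q k = q_k (only k >= 1 are used).\<close>
datatype var = Pp nat | Pm nat | Q nat

fun P :: "bool \<Rightarrow> nat \<Rightarrow> var" where
  "P True k = Pp k" | "P False k = Pm k"

fun var_index :: "var \<Rightarrow> nat" where
  "var_index (Pp k) = k" | "var_index (Pm k) = k" | "var_index (Q k) = k"

type_synonym monomial = "var \<Rightarrow>\<^sub>0 nat"
text \<open>Polynomials: coefficient functions on monomials (finite support imposed where needed).\<close>
type_synonym polyn = "monomial \<Rightarrow> real"

definition pderiv_var :: "var \<Rightarrow> polyn \<Rightarrow> polyn" where
  "pderiv_var v f = (\<lambda>m. real (Poly_Mapping.lookup m v + 1) * f (m + Poly_Mapping.single v 1))"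

definition mult_var :: "var \<Rightarrow> polyn \<Rightarrow> polyn" where
  "mult_var v f = (\<lambda>m. if 0 < Poly_Mapping.lookup m v then f (m - Poly_Mapping.single v 1) else 0)"

text \<open>W^s at hbar = 1; W True = W^+, W False = W^- (obtained by exchanging p^+ and p^-).
  The sign bar-i is + for i even, - for i odd; after the exchange it becomes the opposite.
  For each coefficient only finitely many (i,j) contribute, so Sum_any is the genuine sum.\<close>
definition W :: "bool \<Rightarrow> polyn \<Rightarrow> polyn" where
  "W s f = (\<lambda>m.
     Sum_any (\<lambda>(i,j). if 1 \<le> i \<and> 1 \<le> j then
        (let c = (if even i then s else \<not> s) in
          mult_var (P c i) (mult_var (P s j) (pderiv_var (P c (i+j)) f)) m
        + mult_var (P c (i+j)) (pderiv_var (P c i) (pderiv_var (P s j) f)) m)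
      else 0)
   + Sum_any (\<lambda>i. if 1 \<le> i then
        real i * mult_var (P s (2*i)) (pderiv_var (Q i) f) m
        + mult_var (Q i) (pderiv_var (P s (2*i)) f) m
      else 0))"

fun bdeg_var :: "var \<Rightarrow> nat \<times> nat" where
  "bdeg_var (Pp k) = ((k+1) div 2, k div 2)"
| "bdeg_var (Pm k) = (k div 2, (k+1) div 2)"
| "bdeg_var (Q k) = (k, k)"

definition bdeg :: "monomial \<Rightarrow> nat \<times> nat" where
  "bdeg m = ((\<Sum>v\<in>Poly_Mapping.keys m. Poly_Mapping.lookup m v * fst (bdeg_var v)),
             (\<Sum>v\<in>Poly_Mapping.keys m. Poly_Mapping.lookup m v * snd (bdeg_var v)))"

definition bihom :: "nat \<Rightarrow> nat \<Rightarrow> polyn \<Rightarrow> bool" where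
  "bihom np nm f \<longleftrightarrow> finite {m. f m \<noteq> 0} \<and>
     (\<forall>m. f m \<noteq> 0 \<longrightarrow> (\<forall>v\<in>Poly_Mapping.keys m. 1 \<le> var_index v) \<and> bdeg m = (np, nm))"

fun qweight :: "var \<Rightarrow> nat" where
  "qweight (Q k) = k" | "qweight (Pp k) = 1" | "qweight (Pm k) = 1"

definition zeta :: "monomial \<Rightarrow> real" where
  "zeta m = (\<Prod>v\<in>Poly_Mapping.keys m. fact (Poly_Mapping.lookup m v) * real (qweight v) ^ Poly_Mapping.lookup m v)"

definition sprod :: "polyn \<Rightarrow> polyn \<Rightarrow> real" where
  "sprod f g = Sum_any (\<lambda>m. f m * g m * zeta m)"

end

theory Submission
  imports Defs
begin

text \<open>Since \<open>zeta (m + x_v) = zeta m * (m_v + 1) * qweight v\<close>, multiplication by a variable \<open>v\<close>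
  is adjoint to \<open>qweight v\<close> times the partial derivative in \<open>v\<close>. The operator \<open>W s\<close> is a sum of
  terms \<open>p_a p_b \<partial>_c + p_c \<partial>_a \<partial>_b\<close> with all three \<open>p\<close>-variables of weight 1, and of terms
  \<open>i p_{2i} \<partial>_{q_i} + q_i \<partial>_{p_{2i}}\<close> with \<open>q_i\<close> of weight \<open>i\<close>; taking adjoints swaps the two
  halves of each term. For given \<open>f, g\<close> only finitely many terms contribute, so self-adjointness
  holds for all finitely supported \<open>f, g\<close>.\<close>

abbreviation finite_supp :: "polyn \<Rightarrow> bool" where
  "finite_supp f \<equiv> finite {m. f m \<noteq> 0}"

abbreviation var_mono :: "var \<Rightarrow> monomial" where
  "var_mono v \<equiv> Poly_Mapping.single v 1"

lemma diff_var_mono_add: "0 < Poly_Mapping.lookup m v \<Longrightarrow> m - var_mono v + var_mono v = m"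
  by (rule poly_mapping_eqI) (auto simp: lookup_add lookup_minus lookup_single when_def)

lemma Sum_any_shift_var_mono:
  fixes h :: "monomial \<Rightarrow> real"
  assumes fin: "finite_supp h" and vanish: "\<And>m. Poly_Mapping.lookup m v = 0 \<Longrightarrow> h m = 0"
  shows "Sum_any h = Sum_any (\<lambda>m. h (m + var_mono v))"
proof -
  let ?S = "{m. h m \<noteq> 0}"
  define T where "T = (\<lambda>m. m - var_mono v) ` ?S"
  have "finite T" using fin by (simp add: T_def)
  have shifted_supp: "{m. h (m + var_mono v) \<noteq> 0} \<subseteq> T"
  proof
    fix m assume "m \<in> {m. h (m + var_mono v) \<noteq> 0}"
    then have "m + var_mono v \<in> ?S" "m = (m + var_mono v) - var_mono v" by auto
    then show "m \<in> T" unfolding T_def by blast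
  qed
  have supp: "?S \<subseteq> (\<lambda>m. m + var_mono v) ` T"
  proof
    fix m assume m: "m \<in> ?S"
    then have "0 < Poly_Mapping.lookup m v" using vanish by (metis mem_Collect_eq neq0_conv)
    then have "m - var_mono v + var_mono v = m" by (rule diff_var_mono_add)
    then show "m \<in> (\<lambda>m. m + var_mono v) ` T" using m unfolding T_def by (metis image_eqI)
  qed
  have "Sum_any (\<lambda>m. h (m + var_mono v)) = sum (\<lambda>m. h (m + var_mono v)) T"
    by (rule Sum_any.expand_superset[OF \<open>finite T\<close> shifted_supp])
  also have "\<dots> = sum h ((\<lambda>m. m + var_mono v) ` T)"
    by (simp add: sum.reindex inj_on_def)
  also have "\<dots> = Sum_any h"
    by (rule Sum_any.expand_superset[symmetric]) (use \<open>finite T\<close> supp in auto)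
  finally show ?thesis by simp
qed

lemma zeta_add_var_mono:
  "zeta (m + var_mono v) = zeta m * real (Poly_Mapping.lookup m v + 1) * real (qweight v)"
proof -
  let ?F = "\<lambda>u. fact (Poly_Mapping.lookup m u) * real (qweight u) ^ Poly_Mapping.lookup m u"
  let ?G = "\<lambda>u. fact (Poly_Mapping.lookup (m + var_mono v) u)
                * real (qweight u) ^ Poly_Mapping.lookup (m + var_mono v) u"
  have keys: "Poly_Mapping.keys (m + var_mono v) = insert v (Poly_Mapping.keys m)"
    by (auto simp: in_keys_iff lookup_add lookup_single when_def split: if_splits)
  have rest: "(\<Prod>u\<in>Poly_Mapping.keys m - {v}. ?G u) = (\<Prod>u\<in>Poly_Mapping.keys m - {v}. ?F u)"
    by (intro prod.cong) (auto simp: lookup_add lookup_single when_def)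
  have zeta_m: "zeta m = ?F v * (\<Prod>u\<in>Poly_Mapping.keys m - {v}. ?F u)"
    unfolding zeta_def
    by (cases "v \<in> Poly_Mapping.keys m") (simp_all add: prod.remove in_keys_iff)
  have "zeta (m + var_mono v) = ?G v * (\<Prod>u\<in>Poly_Mapping.keys m - {v}. ?G u)"
    unfolding zeta_def keys by (simp add: prod.insert_remove)
  also have "?G v = ?F v * real (Poly_Mapping.lookup m v + 1) * real (qweight v)"
    by (simp add: lookup_add algebra_simps)
  finally show ?thesis using rest zeta_m by (simp add: algebra_simps)
qed

lemma finite_supp_mult_var: "finite_supp f \<Longrightarrow> finite_supp (mult_var v f)"
proof -
  assume fin: "finite_supp f"
  have "{m. mult_var v f m \<noteq> 0} \<subseteq> (\<lambda>m. m + var_mono v) ` {m. f m \<noteq> 0}"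
  proof
    fix m assume "m \<in> {m. mult_var v f m \<noteq> 0}"
    then have "0 < Poly_Mapping.lookup m v" "f (m - var_mono v) \<noteq> 0"
      by (auto simp: mult_var_def split: if_splits)
    then show "m \<in> (\<lambda>m. m + var_mono v) ` {m. f m \<noteq> 0}"
      using diff_var_mono_add by (metis (mono_tags, lifting) image_eqI mem_Collect_eq)
  qed
  then show ?thesis using fin finite_subset by blast
qed

lemma finite_supp_pderiv_var: "finite_supp f \<Longrightarrow> finite_supp (pderiv_var v f)"
proof -
  assume fin: "finite_supp f"
  have "{m. pderiv_var v f m \<noteq> 0} \<subseteq> (\<lambda>m. m - var_mono v) ` {m. f m \<noteq> 0}"
  proof
    fix m assume "m \<in> {m. pderiv_var v f m \<noteq> 0}"
    then have "f (m + var_mono v) \<noteq> 0" by (auto simp: pderiv_var_def)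
    moreover have "m = (m + var_mono v) - var_mono v" by simp
    ultimately show "m \<in> (\<lambda>m. m - var_mono v) ` {m. f m \<noteq> 0}" by blast
  qed
  then show ?thesis using fin finite_subset by blast
qed

lemma pderiv_var_commute: "pderiv_var a (pderiv_var b f) = pderiv_var b (pderiv_var a f)"
proof (rule ext)
  fix m
  show "pderiv_var a (pderiv_var b f) m = pderiv_var b (pderiv_var a f) m"
    by (cases "a = b") (simp_all add: pderiv_var_def lookup_add lookup_single add_ac)
qed

lemma mult_var_commute: "mult_var a (mult_var b f) = mult_var b (mult_var a f)"
proof (rule ext)
  fix m
  show "mult_var a (mult_var b f) m = mult_var b (mult_var a f) m"
  proof (cases "a = b")
    case False
    have "m - var_mono a - var_mono b = m - var_mono b - var_mono a"
      by (simp add: diff_diff_add add.commute)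
    then show ?thesis using False by (simp add: mult_var_def lookup_minus lookup_single)
  qed simp
qed

lemma sprod_commute: "sprod f g = sprod g f"
  unfolding sprod_def by (simp add: mult_ac)

lemma sprod_mult_var_left:
  assumes fin: "finite_supp f"
  shows "sprod (mult_var v f) g = real (qweight v) * sprod f (pderiv_var v g)"
proof -
  define h where "h m = mult_var v f m * g m * zeta m" for m
  have fin_h: "finite {m. h m \<noteq> 0}"
    by (rule finite_subset[OF _ finite_supp_mult_var[OF fin, of v]]) (auto simp: h_def)
  have "sprod (mult_var v f) g = Sum_any h" by (simp add: sprod_def h_def)
  also have "\<dots> = Sum_any (\<lambda>m. h (m + var_mono v))"
    by (rule Sum_any_shift_var_mono[OF fin_h]) (simp add: h_def mult_var_def)
  also have "\<dots> = Sum_any (\<lambda>m. real (qweight v) * (f m * pderiv_var v g m * zeta m))"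
  proof (rule Sum_any.cong)
    fix m
    have "mult_var v f (m + var_mono v) = f m" by (simp add: mult_var_def lookup_add)
    then show "h (m + var_mono v) = real (qweight v) * (f m * pderiv_var v g m * zeta m)"
      using zeta_add_var_mono[of m v] by (simp add: h_def pderiv_var_def mult_ac)
  qed
  also have "\<dots> = real (qweight v) * sprod f (pderiv_var v g)"
    unfolding sprod_def
    by (rule Sum_any_right_distrib[symmetric], rule finite_subset[OF _ fin]) auto
  finally show ?thesis .
qed

lemma sprod_mult_var_right:
  "finite_supp g \<Longrightarrow> sprod f (mult_var v g) = real (qweight v) * sprod (pderiv_var v f) g"
  using sprod_mult_var_left[of g v f] by (simp add: sprod_commute)

lemma sprod_add_left:
  assumes fin: "finite_supp g"
  shows "sprod (\<lambda>m. f1 m + f2 m) g = sprod f1 g + sprod f2 g"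
  unfolding sprod_def distrib_right
  by (rule Sum_any.distrib; rule finite_subset[OF _ fin]; auto)

lemma sprod_scale_left:
  assumes fin: "finite_supp g"
  shows "sprod (\<lambda>m. c * f m) g = c * sprod f g"
  unfolding sprod_def
  by (subst Sum_any_right_distrib, rule finite_subset[OF _ fin]) (auto simp: mult_ac)

lemma sprod_sum_left:
  assumes fin: "finite_supp g" and "finite K"
  shows "sprod (\<lambda>m. \<Sum>k\<in>K. f k m) g = (\<Sum>k\<in>K. sprod (f k) g)"
  using \<open>finite K\<close>
  by (induction K rule: finite_induct)
     (simp_all add: sprod_def sprod_add_left[OF fin, unfolded sprod_def])

lemma sprod_add_right: "finite_supp f \<Longrightarrow> sprod f (\<lambda>m. g1 m + g2 m) = sprod f g1 + sprod f g2"
  by (metis sprod_add_left sprod_commute)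

lemma sprod_scale_right: "finite_supp f \<Longrightarrow> sprod f (\<lambda>m. c * g m) = c * sprod f g"
  by (metis sprod_scale_left sprod_commute)

lemma sprod_sum_right:
  "finite_supp f \<Longrightarrow> finite K \<Longrightarrow> sprod f (\<lambda>m. \<Sum>k\<in>K. g k m) = (\<Sum>k\<in>K. sprod f (g k))"
  by (subst sprod_commute, subst sprod_sum_left) (auto simp: sprod_commute)

lemma sprod_mult_pderiv_swap:
  assumes "finite_supp f" "finite_supp g"
  shows "real (qweight c) * sprod (mult_var a (pderiv_var c f)) g
       = real (qweight a) * sprod f (mult_var c (pderiv_var a g))"
  using sprod_mult_var_left[OF finite_supp_pderiv_var[OF assms(1)], of a c g]
        sprod_mult_var_right[OF finite_supp_pderiv_var[OF assms(2)], of f c a]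
  by simp

lemma sprod_mult_mult_pderiv_swap:
  assumes fin: "finite_supp f" "finite_supp g"
    and weight: "qweight a = 1" "qweight b = 1" "qweight c = 1"
  shows "sprod (mult_var a (mult_var b (pderiv_var c f))) g
       = sprod f (mult_var c (pderiv_var a (pderiv_var b g)))"
proof -
  have "sprod (mult_var a (mult_var b (pderiv_var c f))) g
      = sprod (mult_var b (pderiv_var c f)) (pderiv_var a g)"
    using sprod_mult_var_left[OF finite_supp_mult_var[OF finite_supp_pderiv_var[OF fin(1)]]] weight
    by simp
  also have "\<dots> = sprod (pderiv_var c f) (pderiv_var b (pderiv_var a g))"
    using sprod_mult_var_left[OF finite_supp_pderiv_var[OF fin(1)]] weight by simp
  also have "\<dots> = sprod f (mult_var c (pderiv_var b (pderiv_var a g)))"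
    using sprod_mult_var_right[OF finite_supp_pderiv_var[OF finite_supp_pderiv_var[OF fin(2)]]] weight
    by simp
  finally show ?thesis by (simp add: pderiv_var_commute)
qed

definition cut_join_term :: "bool \<Rightarrow> nat \<Rightarrow> nat \<Rightarrow> polyn \<Rightarrow> polyn" where
  "cut_join_term s i j f = (\<lambda>m. let c = (if even i then s else \<not> s) in
      mult_var (P c i) (mult_var (P s j) (pderiv_var (P c (i+j)) f)) m
    + mult_var (P c (i+j)) (pderiv_var (P c i) (pderiv_var (P s j) f)) m)"

definition q_term :: "bool \<Rightarrow> nat \<Rightarrow> polyn \<Rightarrow> polyn" where
  "q_term s i f = (\<lambda>m. real i * mult_var (P s (2*i)) (pderiv_var (Q i) f) m
    + mult_var (Q i) (pderiv_var (P s (2*i)) f) m)"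

lemma W_eq_Sum_any_terms:
  "W s f m = Sum_any (\<lambda>(i,j). if 1 \<le> i \<and> 1 \<le> j then cut_join_term s i j f m else 0)
           + Sum_any (\<lambda>i. if 1 \<le> i then q_term s i f m else 0)"
  unfolding W_def cut_join_term_def q_term_def by (rule refl)

lemma qweight_P [simp]: "qweight (P c k) = 1"
  by (cases c) simp_all

lemma var_index_P [simp]: "var_index (P c k) = k"
  by (cases c) simp_all

lemma sprod_cut_join_term_self_adjoint:
  assumes fin: "finite_supp f" "finite_supp g"
  shows "sprod (cut_join_term s i j f) g = sprod f (cut_join_term s i j g)"
proof -
  define c where "c = (if even i then s else \<not> s)"
  let ?a = "P c i" and ?b = "P s j" and ?ab = "P c (i+j)"
  have unfold: "cut_join_term s i j h = (\<lambda>m. mult_var ?a (mult_var ?b (pderiv_var ?ab h)) m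
      + mult_var ?ab (pderiv_var ?a (pderiv_var ?b h)) m)" for h
    by (simp add: cut_join_term_def c_def Let_def)
  have "sprod (mult_var ?a (mult_var ?b (pderiv_var ?ab f))) g
      = sprod f (mult_var ?ab (pderiv_var ?a (pderiv_var ?b g)))"
    using sprod_mult_mult_pderiv_swap[OF fin] by simp
  moreover have "sprod (mult_var ?ab (pderiv_var ?a (pderiv_var ?b f))) g
      = sprod f (mult_var ?a (mult_var ?b (pderiv_var ?ab g)))"
    using sprod_mult_mult_pderiv_swap[OF fin(2,1)] by (simp add: sprod_commute)
  ultimately show ?thesis
    unfolding unfold by (simp add: sprod_add_left[OF fin(2)] sprod_add_right[OF fin(1)])
qed

lemma sprod_q_term_self_adjoint:
  assumes "finite_supp f" "finite_supp g"
  shows "sprod (q_term s i f) g = sprod f (q_term s i g)"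
  unfolding q_term_def
  using assms sprod_add_left[OF assms(2)] sprod_add_right[OF assms(1)]
        sprod_scale_left[OF assms(2)] sprod_scale_right[OF assms(1)]
        sprod_mult_pderiv_swap[of f g "Q i" "P s (2*i)"] sprod_mult_pderiv_swap[of f g "P s (2*i)" "Q i"]
  by simp

definition index_bounded :: "nat \<Rightarrow> monomial set" where
  "index_bounded N = {m. \<forall>v\<in>Poly_Mapping.keys m. var_index v \<le> N}"

lemma index_bounded_lookup:
  "m \<in> index_bounded N \<Longrightarrow> 0 < Poly_Mapping.lookup m v \<Longrightarrow> var_index v \<le> N"
  by (auto simp: index_bounded_def in_keys_iff)

lemma supp_index_bounded_add:
  "\<forall>m. f m \<noteq> 0 \<longrightarrow> m \<in> index_bounded N \<Longrightarrow> f (m + var_mono v) \<noteq> 0 \<Longrightarrow> var_index v \<le> N"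
  by (rule index_bounded_lookup[of "m + var_mono v"]) (auto simp: lookup_add)

lemma mult_var_nonzero:
  "mult_var v f m \<noteq> 0 \<Longrightarrow> f (m - var_mono v) \<noteq> 0 \<and> 0 < Poly_Mapping.lookup m v"
  by (auto simp: mult_var_def split: if_splits)

lemma pderiv_var_nonzero: "pderiv_var v f m \<noteq> 0 \<Longrightarrow> f (m + var_mono v) \<noteq> 0"
  by (auto simp: pderiv_var_def)

lemma cut_join_term_nonzero_index:
  assumes supp: "\<forall>m. f m \<noteq> 0 \<longrightarrow> m \<in> index_bounded N" and m: "m \<in> index_bounded N"
    and nonzero: "cut_join_term s i j f m \<noteq> 0"
  shows "i + j \<le> N"
proof -
  define c where "c = (if even i then s else \<not> s)"
  consider "mult_var (P c i) (mult_var (P s j) (pderiv_var (P c (i+j)) f)) m \<noteq> 0"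
    | "mult_var (P c (i+j)) (pderiv_var (P c i) (pderiv_var (P s j) f)) m \<noteq> 0"
    using nonzero by (fastforce simp: cut_join_term_def c_def Let_def)
  then show ?thesis
  proof cases
    case 1
    then have "f (m - var_mono (P c i) - var_mono (P s j) + var_mono (P c (i+j))) \<noteq> 0"
      using mult_var_nonzero pderiv_var_nonzero by blast
    from supp_index_bounded_add[OF supp this] show ?thesis by simp
  next
    case 2
    then have "0 < Poly_Mapping.lookup m (P c (i+j))" using mult_var_nonzero by blast
    from index_bounded_lookup[OF m this] show ?thesis by simp
  qed
qed

lemma q_term_nonzero_index:
  assumes supp: "\<forall>m. f m \<noteq> 0 \<longrightarrow> m \<in> index_bounded N" and m: "m \<in> index_bounded N"
    and nonzero: "q_term s i f m \<noteq> 0"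
  shows "i \<le> N"
proof -
  consider "mult_var (P s (2*i)) (pderiv_var (Q i) f) m \<noteq> 0"
    | "mult_var (Q i) (pderiv_var (P s (2*i)) f) m \<noteq> 0"
    using nonzero by (fastforce simp: q_term_def)
  then show ?thesis
  proof cases
    case 1
    then have "f (m - var_mono (P s (2*i)) + var_mono (Q i)) \<noteq> 0"
      using mult_var_nonzero pderiv_var_nonzero by blast
    from supp_index_bounded_add[OF supp this] show ?thesis by simp
  next
    case 2
    then have "0 < Poly_Mapping.lookup m (Q i)" using mult_var_nonzero by blast
    from index_bounded_lookup[OF m this] show ?thesis by simp
  qed
qed

lemma W_eq_sum_terms:
  assumes supp: "\<forall>m. f m \<noteq> 0 \<longrightarrow> m \<in> index_bounded N" and m: "m \<in> index_bounded N"
  shows "W s f m = (\<Sum>(i,j)\<in>{1..N}\<times>{1..N}. cut_join_term s i j f m) + (\<Sum>i\<in>{1..N}. q_term s i f m)"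
proof -
  have "Sum_any (\<lambda>(i,j). if 1 \<le> i \<and> 1 \<le> j then cut_join_term s i j f m else 0)
      = (\<Sum>(i,j)\<in>{1..N}\<times>{1..N}. if 1 \<le> i \<and> 1 \<le> j then cut_join_term s i j f m else 0)"
    by (rule Sum_any.expand_superset)
       (use cut_join_term_nonzero_index[OF supp m] in \<open>force split: if_splits\<close>)+
  also have "\<dots> = (\<Sum>(i,j)\<in>{1..N}\<times>{1..N}. cut_join_term s i j f m)"
    by (rule sum.cong) auto
  finally have cut_join: "Sum_any (\<lambda>(i,j). if 1 \<le> i \<and> 1 \<le> j then cut_join_term s i j f m else 0)
      = (\<Sum>(i,j)\<in>{1..N}\<times>{1..N}. cut_join_term s i j f m)" .
  have "Sum_any (\<lambda>i. if 1 \<le> i then q_term s i f m else 0)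
      = (\<Sum>i\<in>{1..N}. if 1 \<le> i then q_term s i f m else 0)"
    by (rule Sum_any.expand_superset)
       (use q_term_nonzero_index[OF supp m] in \<open>force split: if_splits\<close>)+
  then have q: "Sum_any (\<lambda>i. if 1 \<le> i then q_term s i f m else 0) = (\<Sum>i\<in>{1..N}. q_term s i f m)"
    by simp
  show ?thesis using W_eq_Sum_any_terms[of s f m] cut_join q by simp
qed

lemma finite_supp_index_bounded:
  assumes "finite_supp f"
  obtains N where "\<forall>m. f m \<noteq> 0 \<longrightarrow> m \<in> index_bounded N"
proof
  let ?V = "var_index ` (\<Union>m\<in>{m. f m \<noteq> 0}. Poly_Mapping.keys m)"
  have "finite ?V" using assms by simp
  then show "\<forall>m. f m \<noteq> 0 \<longrightarrow> m \<in> index_bounded (Max ?V)"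
    by (auto simp: index_bounded_def intro!: Max_ge)
qed

lemma index_bounded_mono: "N \<le> N' \<Longrightarrow> index_bounded N \<subseteq> index_bounded N'"
  by (auto simp: index_bounded_def)

lemma sprod_W_self_adjoint_bounded:
  assumes fin: "finite_supp f" "finite_supp g"
    and supp: "\<forall>m. f m \<noteq> 0 \<longrightarrow> m \<in> index_bounded N" "\<forall>m. g m \<noteq> 0 \<longrightarrow> m \<in> index_bounded N"
  shows "sprod (W s f) g = sprod f (W s g)"
proof -
  let ?K = "{1..N}\<times>{1..N}" and ?I = "{1..N}"
  let ?Wf = "\<lambda>m. (\<Sum>(i,j)\<in>?K. cut_join_term s i j f m) + (\<Sum>i\<in>?I. q_term s i f m)"
  let ?Wg = "\<lambda>m. (\<Sum>(i,j)\<in>?K. cut_join_term s i j g m) + (\<Sum>i\<in>?I. q_term s i g m)"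
  have "sprod (W s f) g = sprod ?Wf g"
    unfolding sprod_def
  proof (rule Sum_any.cong)
    fix m show "W s f m * g m * zeta m = ?Wf m * g m * zeta m"
      using W_eq_sum_terms[OF supp(1), of m s] supp(2) by (cases "g m = 0") auto
  qed
  also have "\<dots> = (\<Sum>(i,j)\<in>?K. sprod (cut_join_term s i j f) g) + (\<Sum>i\<in>?I. sprod (q_term s i f) g)"
    by (simp add: sprod_add_left[OF fin(2)] sprod_sum_left[OF fin(2)] case_prod_unfold)
  also have "\<dots> = (\<Sum>(i,j)\<in>?K. sprod f (cut_join_term s i j g)) + (\<Sum>i\<in>?I. sprod f (q_term s i g))"
    by (simp add: sprod_cut_join_term_self_adjoint[OF fin] sprod_q_term_self_adjoint[OF fin])
  also have "\<dots> = sprod f ?Wg"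
    by (simp add: sprod_add_right[OF fin(1)] sprod_sum_right[OF fin(1)] case_prod_unfold)
  also have "\<dots> = sprod f (W s g)"
    unfolding sprod_def
  proof (rule Sum_any.cong)
    fix m show "f m * ?Wg m * zeta m = f m * W s g m * zeta m"
      using W_eq_sum_terms[OF supp(2), of m s] supp(1) by (cases "f m = 0") auto
  qed
  finally show ?thesis .
qed

theorem sprod_W_self_adjoint:
  assumes fin: "finite_supp f" "finite_supp g"
  shows "sprod (W s f) g = sprod f (W s g)"
proof -
  obtain Nf where Nf: "\<forall>m. f m \<noteq> 0 \<longrightarrow> m \<in> index_bounded Nf"
    using finite_supp_index_bounded[OF fin(1)] .
  obtain Ng where Ng: "\<forall>m. g m \<noteq> 0 \<longrightarrow> m \<in> index_bounded Ng"
    using finite_supp_index_bounded[OF fin(2)] .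
  have "\<forall>m. f m \<noteq> 0 \<longrightarrow> m \<in> index_bounded (max Nf Ng)"
       "\<forall>m. g m \<noteq> 0 \<longrightarrow> m \<in> index_bounded (max Nf Ng)"
    using Nf Ng index_bounded_mono[of Nf "max Nf Ng"] index_bounded_mono[of Ng "max Nf Ng"] by auto
  then show ?thesis by (rule sprod_W_self_adjoint_bounded[OF fin])
qed

theorem proposition4p5:
  fixes np nm :: nat and f g :: polyn
  assumes "bihom np nm f" and "bihom np nm g"
  shows "sprod (W True f) g = sprod f (W True g) \<and>
         sprod (W False f) g = sprod f (W False g)"
  using assms by (simp add: bihom_def sprod_W_self_adjoint)

end
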